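(* Let $A,\Delta A\in\mathbb{R}^{n\times m}$, $\widetilde A=A+\Delta A$, $1\le r<\min\{n,m\}$, and assume $\sigma_r-\widetilde\sigma_{r+1}>0$ and $\widetilde\sigma_r-\sigma_{r+1}>0$. Let $H_1\in\mathbb{R}^{(n-r)\times r}$, $H_2\in\mathbb{R}^{(m-r)\times r}$, $H_3\in\mathbb{R}^{r\times (m-r)}$, $H_4\in\mathbb{R}^{r\times(n-r)}$ be arbitrary, and set $B_1=F_U^{21}\circ(H_1\widetilde\Sigma_1)$, $B_2=F_U^{21}\circ(\Sigma_2H_2)$, $B_3=F_U^{12}\circ(H_3\widetilde\Sigma_2^T)$, $B_4=F_U^{12}\circ(\Sigma_1H_4)$. Then for $p\in\{2,\infty\}$, \[\|B_1\|_p\le\frac{\widetilde\sigma_r}{\widetilde\sigma_r^2-\sigma_{r+1}^2}\|H_1\|_p,\quad \|B_2\|_p\le\frac{\sigma_{r+1}}{\widetilde\sigma_r^2-\sigma_{r+1}^2}\|H_2\|_p,\] \[\|B_3\|_p\le\frac{\widetilde\sigma_{r+1}}{\sigma_r^2-\widetilde\sigma_{r+1}^2}\|H_3\|_p,\quad \|B_4\|_p\le\frac{\sigma_{r}}{\sigma_r^2-\widetilde\sigma_{r+1}^2}\|H_4\|_p.\]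
   Context: $\sigma_1\ge\sigma_2\ge\dots$ and $\widetilde\sigma_1\ge\widetilde\sigma_2\ge\dots$ are the singular values of $A$ and $\widetilde A$, with $\sigma_i=\widetilde\sigma_i=0$ for $i>\min\{n,m\}$. $\Sigma_1=\mathrm{diag}(\sigma_1,\dots,\sigma_r)$, $\widetilde\Sigma_1=\mathrm{diag}(\widetilde\sigma_1,\dots,\widetilde\sigma_r)$; $\Sigma_2,\widetilde\Sigma_2\in\mathbb{R}^{(n-r)\times(m-r)}$ are rectangular diagonal matrices with diagonals $\sigma_{r+1},\sigma_{r+2},\dots$ and $\widetilde\sigma_{r+1},\widetilde\sigma_{r+2},\dots$. $F_U^{12}\in\mathbb{R}^{r\times(n-r)}$ has entries $(F_U^{12})_{i,j-r}=1/(\widetilde\sigma_j^2-\sigma_i^2)$ for $1\le i\le r<j\le n$; $F_U^{21}\in\mathbb{R}^{(n-r)\times r}$ has entries $(F_U^{21})_{i-r,j}=1/(\widetilde\sigma_j^2-\sigma_i^2)$ for $r<i\le n$, $1\le j\le r$. $\circ$ is the Hadamard product. $\|\cdot\|_p$ is the Schatten $p$-norm, so $\|\cdot\|_2$ is the Frobenius norm and $\|\cdot\|_\infty$ the spectral norm. *)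

theory Defs
  imports "Jordan_Normal_Form.Matrix"
begin

(* Matrices are Jordan_Normal_Form matrices (0-based entries). Singular values are
   indexed 1-based as in the paper: s 1 \<ge> s 2 \<ge> ... ; the value s 0 is irrelevant. *)

definition rect_diag :: "nat \<Rightarrow> nat \<Rightarrow> (nat \<Rightarrow> real) \<Rightarrow> real mat" where
  "rect_diag n m d = mat n m (\<lambda>(i,j). if i = j then d i else 0)"

definition singular_values_of :: "real mat \<Rightarrow> (nat \<Rightarrow> real) \<Rightarrow> bool" where
  "singular_values_of A s \<longleftrightarrow>
     (let n = dim_row A; m = dim_col A in
       (\<forall>i j. 1 \<le> i \<longrightarrow> i \<le> j \<longrightarrow> s j \<le> s i) \<and>
       (\<forall>i. 1 \<le> i \<longrightarrow> 0 \<le> s i) \<and>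
       (\<forall>i. min n m < i \<longrightarrow> s i = 0) \<and>
       (\<exists>U V. U \<in> carrier_mat n n \<and> V \<in> carrier_mat m m \<and>
              transpose_mat U * U = 1\<^sub>m n \<and> transpose_mat V * V = 1\<^sub>m m \<and>
              A = U * rect_diag n m (\<lambda>i. s (i + 1)) * transpose_mat V))"

definition Sig1 :: "nat \<Rightarrow> (nat \<Rightarrow> real) \<Rightarrow> real mat" where
  "Sig1 r s = rect_diag r r (\<lambda>i. s (i + 1))"

definition Sig2 :: "nat \<Rightarrow> nat \<Rightarrow> nat \<Rightarrow> (nat \<Rightarrow> real) \<Rightarrow> real mat" where
  "Sig2 n m r s = rect_diag (n - r) (m - r) (\<lambda>i. s (r + i + 1))"

(* F_U^{12} : r x (n-r), entry (i, j-r) = 1/(st_j^2 - s_i^2), 1<=i<=r<j<=n *)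
definition FU12 :: "nat \<Rightarrow> nat \<Rightarrow> (nat \<Rightarrow> real) \<Rightarrow> (nat \<Rightarrow> real) \<Rightarrow> real mat" where
  "FU12 n r s st = mat r (n - r) (\<lambda>(a,b). 1 / ((st (r + b + 1))\<^sup>2 - (s (a + 1))\<^sup>2))"

(* F_U^{21} : (n-r) x r, entry (i-r, j) = 1/(st_j^2 - s_i^2), r<i<=n, 1<=j<=r *)
definition FU21 :: "nat \<Rightarrow> nat \<Rightarrow> (nat \<Rightarrow> real) \<Rightarrow> (nat \<Rightarrow> real) \<Rightarrow> real mat" where
  "FU21 n r s st = mat (n - r) r (\<lambda>(a,b). 1 / ((st (b + 1))\<^sup>2 - (s (r + a + 1))\<^sup>2))"

definition hadamard :: "real mat \<Rightarrow> real mat \<Rightarrow> real mat" where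
  "hadamard A B = mat (dim_row A) (dim_col A) (\<lambda>(i,j). A $$ (i,j) * B $$ (i,j))"

definition vec_norm :: "real vec \<Rightarrow> real" where
  "vec_norm v = sqrt (v \<bullet> v)"

(* Schatten 2-norm = Frobenius norm *)
definition frob_norm :: "real mat \<Rightarrow> real" where
  "frob_norm B = sqrt (\<Sum>i<dim_row B. \<Sum>j<dim_col B. (B $$ (i,j))\<^sup>2)"

(* Schatten infinity-norm = spectral (operator 2-) norm *)
definition spec_norm :: "real mat \<Rightarrow> real" where
  "spec_norm B = Sup {vec_norm (B *\<^sub>v x) | x. x \<in> carrier_vec (dim_col B) \<and> vec_norm x = 1}"

end

(* After absorbing the diagonal factor, every entry of the Hadamard multiplier has the form
   x^d y^e / (y^2 - x^2) with 0 <= x <= alpha < beta <= y, where alpha and beta are the two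
   singular values on either side of the gap.  Expanding it as the geometric series
   sum_k x^(2k+d) y^e / y^(2k+2) writes B as a convergent sum of two-sided diagonal scalings
   D_k H E_k with |D_k| |E_k| <= alpha^(2k+d) beta^e / beta^(2k+2); these bounds sum to
   alpha^d beta^e / (beta^2 - alpha^2), which therefore bounds the multiplier in both the
   Frobenius and the spectral norm.  The rectangular Sigma_2 merely truncates or zero-pads
   H_2 and H_3, which increases neither norm. *)

theory Submission
  imports Defs "HOL-Analysis.L2_Norm"
begin

lemma vec_norm_L2_set: "vec_norm v = L2_set (\<lambda>i. v $ i) {0..<dim_vec v}"
  unfolding vec_norm_def scalar_prod_def L2_set_def by (simp add: power2_eq_square)

lemma vec_norm_nonneg: "0 \<le> vec_norm v"
  by (simp add: vec_norm_L2_set)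

lemma L2_set_abs: "L2_set (\<lambda>i. \<bar>f i\<bar>) A = L2_set f A"
  unfolding L2_set_def by simp

lemma vec_norm_smult: "vec_norm (k \<cdot>\<^sub>v v) = \<bar>k\<bar> * vec_norm v"
proof -
  have "vec_norm (k \<cdot>\<^sub>v v) = L2_set (\<lambda>i. \<bar>k\<bar> * v $ i) {0..<dim_vec v}"
    unfolding vec_norm_L2_set L2_set_def by (simp add: power_mult_distrib)
  then show ?thesis
    by (simp add: vec_norm_L2_set L2_set_right_distrib)
qed

lemma vec_norm_mult_self: "vec_norm v * vec_norm v = v \<bullet> v"
proof -
  have "0 \<le> v \<bullet> v"
    by (simp add: scalar_prod_def sum_nonneg)
  then show ?thesis
    by (simp add: vec_norm_def)
qed

lemma abs_scalar_prod_le: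
  assumes "dim_vec v = dim_vec w"
  shows "\<bar>v \<bullet> w\<bar> \<le> vec_norm v * vec_norm w"
proof -
  have "\<bar>v \<bullet> w\<bar> \<le> (\<Sum>i\<in>{0..<dim_vec w}. \<bar>v $ i\<bar> * \<bar>w $ i\<bar>)"
    unfolding scalar_prod_def by (rule order_trans[OF sum_abs]) (simp add: abs_mult)
  also have "\<dots> \<le> L2_set (\<lambda>i. v $ i) {0..<dim_vec w} * L2_set (\<lambda>i. w $ i) {0..<dim_vec w}"
    by (rule L2_set_mult_ineq)
  finally show ?thesis
    using assms by (simp add: vec_norm_L2_set)
qed

lemma vec_norm_scale_le:
  assumes "\<And>i. i < dim_vec v \<Longrightarrow> \<bar>p i\<bar> \<le> P" and "0 \<le> P"
  shows "vec_norm (vec (dim_vec v) (\<lambda>i. p i * v $ i)) \<le> P * vec_norm v"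
proof -
  have "vec_norm (vec (dim_vec v) (\<lambda>i. p i * v $ i)) = L2_set (\<lambda>i. \<bar>p i\<bar> * \<bar>v $ i\<bar>) {0..<dim_vec v}"
    unfolding vec_norm_L2_set L2_set_def by (simp add: power_mult_distrib)
  also have "\<dots> \<le> L2_set (\<lambda>i. P * \<bar>v $ i\<bar>) {0..<dim_vec v}"
    using assms(1) by (intro L2_set_mono) (simp_all add: mult_right_mono)
  also have "\<dots> = P * vec_norm v"
    using assms(2) by (simp add: vec_norm_L2_set L2_set_right_distrib[symmetric] L2_set_abs)
  finally show ?thesis .
qed

lemma sum_lessThan_if: "(\<Sum>i<n. if i < (m::nat) then f i else 0) = (\<Sum>i<min n m. f i)"
proof -
  have "{..<n} \<inter> {..<m} = {..<min n m}"
    by auto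
  then show ?thesis
    using sum.inter_restrict[of "{..<n}" f "{..<m}"] by simp
qed

lemma sum_lessThan_if_le:
  fixes f :: "nat \<Rightarrow> real"
  assumes "\<And>i. 0 \<le> f i"
  shows "(\<Sum>i<n. if i < m then f i else 0) \<le> (\<Sum>i<m. f i)"
  unfolding sum_lessThan_if using assms by (intro sum_mono2) auto

lemma vec_norm_resize_le:
  "vec_norm (vec n (\<lambda>i. if i < dim_vec v then v $ i else 0)) \<le> vec_norm v"
proof -
  have "(\<Sum>i<n. (if i < dim_vec v then v $ i else 0)\<^sup>2)
        = (\<Sum>i<n. if i < dim_vec v then (v $ i)\<^sup>2 else 0)"
    by (intro sum.cong) auto
  also have "\<dots> \<le> (\<Sum>i<dim_vec v. (v $ i)\<^sup>2)"
    by (rule sum_lessThan_if_le) simp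
  finally show ?thesis
    unfolding vec_norm_L2_set L2_set_def by (simp add: atLeast0LessThan)
qed

lemma frob_norm_eq_L2_set_rows:
  "frob_norm H = L2_set (\<lambda>i. vec_norm (row H i)) {0..<dim_row H}"
proof -
  have "(vec_norm (row H i))\<^sup>2 = (\<Sum>j<dim_col H. (H $$ (i, j))\<^sup>2)" for i
    by (auto simp: vec_norm_def scalar_prod_def row_def sum_nonneg atLeast0LessThan
        simp flip: power2_eq_square intro!: sum.cong)
  then show ?thesis
    unfolding frob_norm_def L2_set_def by (simp add: atLeast0LessThan)
qed

lemma frob_norm_nonneg: "0 \<le> frob_norm H"
  by (simp add: frob_norm_def sum_nonneg)

lemma vec_norm_mult_mat_vec_le_frob_norm:
  assumes "H \<in> carrier_mat a b" and "x \<in> carrier_vec b"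
  shows "vec_norm (H *\<^sub>v x) \<le> frob_norm H * vec_norm x"
proof -
  have "vec_norm (H *\<^sub>v x) = L2_set (\<lambda>i. \<bar>row H i \<bullet> x\<bar>) {0..<a}"
    unfolding vec_norm_L2_set L2_set_abs using assms by (intro L2_set_cong) auto
  also have "\<dots> \<le> L2_set (\<lambda>i. vec_norm (row H i) * vec_norm x) {0..<a}"
    using assms by (intro L2_set_mono abs_scalar_prod_le) auto
  also have "\<dots> = frob_norm H * vec_norm x"
    using assms by (simp add: frob_norm_eq_L2_set_rows L2_set_left_distrib vec_norm_nonneg)
  finally show ?thesis .
qed

lemma frob_norm_le_entrywise:
  assumes "M \<in> carrier_mat a b" and "K \<in> carrier_mat a b" and "0 \<le> c"
    and "\<And>i j. i < a \<Longrightarrow> j < b \<Longrightarrow> \<bar>M $$ (i, j)\<bar> \<le> c * \<bar>K $$ (i, j)\<bar>"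
  shows "frob_norm M \<le> c * frob_norm K"
proof -
  have entry: "(M $$ (i, j))\<^sup>2 \<le> c\<^sup>2 * (K $$ (i, j))\<^sup>2" if "i < a" "j < b" for i j
    using power_mono[OF assms(4)[OF that] abs_ge_zero, of 2] by (simp add: power_mult_distrib)
  have "(\<Sum>i<a. \<Sum>j<b. (M $$ (i, j))\<^sup>2) \<le> c\<^sup>2 * (\<Sum>i<a. \<Sum>j<b. (K $$ (i, j))\<^sup>2)"
    unfolding sum_distrib_left by (intro sum_mono entry) simp_all
  then have "sqrt (\<Sum>i<a. \<Sum>j<b. (M $$ (i, j))\<^sup>2) \<le> sqrt (c\<^sup>2 * (\<Sum>i<a. \<Sum>j<b. (K $$ (i, j))\<^sup>2))"
    by (rule real_sqrt_le_mono)
  then show ?thesis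
    using assms(1-3) by (simp add: frob_norm_def real_sqrt_mult)
qed

lemma mult_mat_vec_le_spec_norm:
  assumes "H \<in> carrier_mat a b" and "x \<in> carrier_vec b"
  shows "vec_norm (H *\<^sub>v x) \<le> spec_norm H * vec_norm x"
proof (cases "vec_norm x = 0")
  case True
  then show ?thesis
    using vec_norm_mult_mat_vec_le_frob_norm[OF assms] vec_norm_nonneg[of "H *\<^sub>v x"] by simp
next
  case False
  then have pos: "0 < vec_norm x"
    using vec_norm_nonneg[of x] by linarith
  define u where "u = (1 / vec_norm x) \<cdot>\<^sub>v x"
  have u: "u \<in> carrier_vec b" "vec_norm u = 1"
    using assms(2) pos by (simp_all add: u_def vec_norm_smult)
  have "bdd_above {vec_norm (H *\<^sub>v x) | x. x \<in> carrier_vec (dim_col H) \<and> vec_norm x = 1}"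
    using assms(1)
    by (intro bdd_aboveI[of _ "frob_norm H"]) (auto dest!: vec_norm_mult_mat_vec_le_frob_norm[OF assms(1)])
  then have "vec_norm (H *\<^sub>v u) \<le> spec_norm H"
    unfolding spec_norm_def using assms(1) u by (intro cSup_upper) auto
  moreover have "H *\<^sub>v u = (1 / vec_norm x) \<cdot>\<^sub>v (H *\<^sub>v x)"
    using assms by (simp add: u_def mult_mat_vec)
  ultimately show ?thesis
    using pos by (simp add: vec_norm_smult field_simps)
qed

lemma vec_norm_unit_vec: "i < n \<Longrightarrow> vec_norm (unit_vec n i) = 1"
  by (simp add: vec_norm_def)

(* For a matrix without columns the set in spec_norm_def is empty and its Sup is unspecified. *)
lemma spec_norm_nonneg:
  assumes "0 < dim_col H"
  shows "0 \<le> spec_norm H"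
  using mult_mat_vec_le_spec_norm[of H "dim_row H" "dim_col H" "unit_vec (dim_col H) 0"]
    vec_norm_nonneg[of "H *\<^sub>v unit_vec (dim_col H) 0"] assms
  by (simp add: vec_norm_unit_vec)

lemma spec_norm_leI:
  assumes "0 < dim_col M"
    and "\<And>x. x \<in> carrier_vec (dim_col M) \<Longrightarrow> vec_norm x = 1 \<Longrightarrow> vec_norm (M *\<^sub>v x) \<le> C"
  shows "spec_norm M \<le> C"
  unfolding spec_norm_def using assms vec_norm_unit_vec[OF assms(1)]
  by (intro cSup_least) (auto intro!: exI[of _ "unit_vec (dim_col M) 0"])

definition mat_resize :: "nat \<Rightarrow> nat \<Rightarrow> 'a :: zero mat \<Rightarrow> 'a mat" where
  "mat_resize a b H = mat a b (\<lambda>(i, j). if i < dim_row H \<and> j < dim_col H then H $$ (i, j) else 0)"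

lemma dim_mat_resize [simp]:
  "dim_row (mat_resize a b H) = a" "dim_col (mat_resize a b H) = b"
  by (simp_all add: mat_resize_def)

lemma frob_norm_mat_resize_le: "frob_norm (mat_resize a b H) \<le> frob_norm H"
proof -
  have "(\<Sum>i<a. \<Sum>j<b. (mat_resize a b H $$ (i, j))\<^sup>2)
        = (\<Sum>i<a. if i < dim_row H then \<Sum>j<b. if j < dim_col H then (H $$ (i, j))\<^sup>2 else 0 else 0)"
    by (auto simp: mat_resize_def intro!: sum.cong)
  also have "\<dots> \<le> (\<Sum>i<a. if i < dim_row H then \<Sum>j<dim_col H. (H $$ (i, j))\<^sup>2 else 0)"
    by (intro sum_mono) (simp add: sum_lessThan_if_le)
  also have "\<dots> \<le> (\<Sum>i<dim_row H. \<Sum>j<dim_col H. (H $$ (i, j))\<^sup>2)"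
    by (intro sum_lessThan_if_le sum_nonneg) simp
  finally show ?thesis
    unfolding frob_norm_def by (simp add: mat_resize_def)
qed

lemma mat_resize_mult_mat_vec:
  assumes "x \<in> carrier_vec b"
  shows "mat_resize a b H *\<^sub>v x = vec a (\<lambda>i. if i < dim_row H
           then (H *\<^sub>v vec (dim_col H) (\<lambda>j. if j < b then x $ j else 0)) $ i else 0)"
    (is "_ = ?v")
proof (rule eq_vecI)
  fix i assume "i < dim_vec ?v"
  then have i: "i < a"
    by simp
  have "(\<Sum>j<b. (if j < dim_col H then H $$ (i, j) else 0) * x $ j)
        = (\<Sum>j<b. if j < dim_col H then H $$ (i, j) * x $ j else 0)"
    by (intro sum.cong) auto
  also have "\<dots> = (\<Sum>j<dim_col H. if j < b then H $$ (i, j) * x $ j else 0)"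
    by (simp add: sum_lessThan_if min.commute)
  also have "\<dots> = (\<Sum>j<dim_col H. H $$ (i, j) * (if j < b then x $ j else 0))"
    by (intro sum.cong) auto
  finally show "(mat_resize a b H *\<^sub>v x) $ i = ?v $ i"
    using i assms by (auto simp: mat_resize_def scalar_prod_def row_def atLeast0LessThan)
qed simp

lemma spec_norm_mat_resize_le:
  assumes "0 < b" and "0 < dim_col H"
  shows "spec_norm (mat_resize a b H) \<le> spec_norm H"
proof (rule spec_norm_leI)
  show "0 < dim_col (mat_resize a b H)"
    using assms(1) by (simp add: mat_resize_def)
  fix x assume x: "x \<in> carrier_vec (dim_col (mat_resize a b H))" and unit: "vec_norm x = 1"
  define z where "z = vec (dim_col H) (\<lambda>j. if j < b then x $ j else 0)"
  have "vec_norm (mat_resize a b H *\<^sub>v x) \<le> vec_norm (H *\<^sub>v z)"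
    using x vec_norm_resize_le[of a "H *\<^sub>v z"] unfolding z_def
    by (simp add: mat_resize_mult_mat_vec)
  also have "\<dots> \<le> spec_norm H * vec_norm z"
    by (rule mult_mat_vec_le_spec_norm[of H "dim_row H" "dim_col H"]) (simp_all add: z_def)
  also have "\<dots> \<le> spec_norm H"
    using vec_norm_resize_le[of "dim_col H" x] x unit spec_norm_nonneg[OF assms(2)]
    by (simp add: z_def mult_left_le)
  finally show "vec_norm (mat_resize a b H *\<^sub>v x) \<le> spec_norm H" .
qed

lemma abs_sums_le:
  fixes f g :: "nat \<Rightarrow> real"
  assumes "f sums s" and "g sums t" and "\<And>k. \<bar>f k\<bar> \<le> g k"
  shows "\<bar>s\<bar> \<le> t"
proof -
  have "s \<le> t"
    using assms(3) by (intro sums_le[OF _ assms(1,2)]) (simp add: abs_le_iff)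
  moreover have "- s \<le> t"
    using assms(3) by (intro sums_le[OF _ sums_minus[OF assms(1)] assms(2)]) (simp add: abs_le_iff)
  ultimately show ?thesis
    by linarith
qed

locale diagonal_scaling_series =
  fixes K M :: "real mat" and a b :: nat
    and p q :: "nat \<Rightarrow> nat \<Rightarrow> real" and P Q :: "nat \<Rightarrow> real" and c :: real
  assumes K: "K \<in> carrier_mat a b" and M: "M \<in> carrier_mat a b"
    and entry_sums: "\<And>i j. i < a \<Longrightarrow> j < b \<Longrightarrow> (\<lambda>k. p k i * K $$ (i, j) * q k j) sums M $$ (i, j)"
    and p_bound: "\<And>k i. i < a \<Longrightarrow> \<bar>p k i\<bar> \<le> P k"
    and q_bound: "\<And>k j. j < b \<Longrightarrow> \<bar>q k j\<bar> \<le> Q k"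
    and P_nonneg: "\<And>k. 0 \<le> P k" and Q_nonneg: "\<And>k. 0 \<le> Q k"
    and bound_sums: "(\<lambda>k. P k * Q k) sums c"
begin

lemma c_nonneg: "0 \<le> c"
  using sums_le[OF _ sums_zero bound_sums] P_nonneg Q_nonneg by simp

lemma abs_entry_le:
  assumes "i < a" and "j < b"
  shows "\<bar>M $$ (i, j)\<bar> \<le> c * \<bar>K $$ (i, j)\<bar>"
proof (rule abs_sums_le[OF entry_sums[OF assms] sums_mult2[OF bound_sums]])
  fix k
  have "\<bar>p k i * K $$ (i, j) * q k j\<bar> = \<bar>p k i\<bar> * \<bar>q k j\<bar> * \<bar>K $$ (i, j)\<bar>"
    by (simp add: abs_mult)
  also have "\<dots> \<le> P k * Q k * \<bar>K $$ (i, j)\<bar>"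
    using p_bound[OF assms(1)] q_bound[OF assms(2)] P_nonneg by (intro mult_right_mono mult_mono) auto
  finally show "\<bar>p k i * K $$ (i, j) * q k j\<bar> \<le> P k * Q k * \<bar>K $$ (i, j)\<bar>" .
qed

lemma frob_norm_le: "frob_norm M \<le> c * frob_norm K"
  by (rule frob_norm_le_entrywise[OF M K c_nonneg abs_entry_le])

lemma abs_bilinear_le:
  assumes y: "y \<in> carrier_vec a" and x: "x \<in> carrier_vec b" and "0 < b"
  shows "\<bar>y \<bullet> (M *\<^sub>v x)\<bar> \<le> c * (spec_norm K * vec_norm y * vec_norm x)"
proof -
  define yk where "yk k = vec a (\<lambda>i. p k i * y $ i)" for k
  define xk where "xk k = vec b (\<lambda>j. q k j * x $ j)" for k
  define T where "T k = yk k \<bullet> (K *\<^sub>v xk k)" for k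
  have T_eq: "T k = (\<Sum>i<a. \<Sum>j<b. y $ i * x $ j * (p k i * K $$ (i, j) * q k j))" for k
    using K unfolding T_def yk_def xk_def
    by (auto simp: scalar_prod_def row_def atLeast0LessThan sum_distrib_left mult_ac intro!: sum.cong)
  have bilinear_eq: "y \<bullet> (M *\<^sub>v x) = (\<Sum>i<a. \<Sum>j<b. y $ i * x $ j * M $$ (i, j))"
    using M x y by (auto simp: scalar_prod_def row_def atLeast0LessThan sum_distrib_left mult_ac intro!: sum.cong)
  have T_sums: "T sums (y \<bullet> (M *\<^sub>v x))"
    unfolding T_eq bilinear_eq by (intro sums_sum sums_mult entry_sums) auto
  have "\<bar>T k\<bar> \<le> P k * Q k * (spec_norm K * vec_norm y * vec_norm x)" for k
  proof -
    have "\<bar>T k\<bar> \<le> vec_norm (yk k) * vec_norm (K *\<^sub>v xk k)"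
      unfolding T_def using K by (intro abs_scalar_prod_le) (simp add: yk_def)
    also have "\<dots> \<le> (P k * vec_norm y) * (spec_norm K * (Q k * vec_norm x))"
    proof (intro mult_mono)
      show "vec_norm (yk k) \<le> P k * vec_norm y"
        using vec_norm_scale_le[of y "p k" "P k"] y p_bound P_nonneg by (simp add: yk_def)
      have "vec_norm (K *\<^sub>v xk k) \<le> spec_norm K * vec_norm (xk k)"
        using K by (intro mult_mat_vec_le_spec_norm) (auto simp: xk_def)
      also have "\<dots> \<le> spec_norm K * (Q k * vec_norm x)"
        using vec_norm_scale_le[of x "q k" "Q k"] x q_bound Q_nonneg spec_norm_nonneg[of K] K \<open>0 < b\<close>
        by (intro mult_left_mono) (auto simp: xk_def)
      finally show "vec_norm (K *\<^sub>v xk k) \<le> spec_norm K * (Q k * vec_norm x)" .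
    qed (simp_all add: vec_norm_nonneg P_nonneg)
    finally show ?thesis
      by (simp add: mult_ac)
  qed
  then show ?thesis
    by (intro abs_sums_le[OF T_sums sums_mult2[OF bound_sums]])
qed

lemma spec_norm_le:
  assumes "0 < b"
  shows "spec_norm M \<le> c * spec_norm K"
proof (rule spec_norm_leI)
  show "0 < dim_col M"
    using M assms by simp
  fix x assume x: "x \<in> carrier_vec (dim_col M)" and unit: "vec_norm x = 1"
  define y where "y = M *\<^sub>v x"
  have "vec_norm y * vec_norm y = \<bar>y \<bullet> (M *\<^sub>v x)\<bar>"
    by (simp add: y_def vec_norm_nonneg flip: vec_norm_mult_self)
  also have "\<dots> \<le> c * spec_norm K * vec_norm y"
    using abs_bilinear_le[of y x] M x assms unit by (simp add: y_def mult_ac)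
  finally have le: "vec_norm y * vec_norm y \<le> c * spec_norm K * vec_norm y" .
  show "vec_norm (M *\<^sub>v x) \<le> c * spec_norm K"
  proof (cases "vec_norm y = 0")
    case True
    then show ?thesis
      using c_nonneg spec_norm_nonneg[of K] K assms by (simp add: y_def)
  next
    case False
    then show ?thesis
      using le vec_norm_nonneg[of y] by (simp add: y_def)
  qed
qed

end

lemma gap_geometric_sums:
  fixes x y :: real
  assumes "0 \<le> x" and "x < y"
  shows "(\<lambda>k. x ^ (2 * k + d) * (y ^ e / y ^ (2 * k + 2))) sums (x ^ d * y ^ e / (y\<^sup>2 - x\<^sup>2))"
proof -
  have y: "0 < y"
    using assms by linarith
  have "x\<^sup>2 < y\<^sup>2"
    using assms by (intro power_strict_mono) auto
  then have ratio: "norm (x\<^sup>2 / y\<^sup>2) < 1"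
    using assms y by (simp add: divide_less_eq)
  have geometric: "(\<lambda>k. x ^ d * y ^ e / y\<^sup>2 * (x\<^sup>2 / y\<^sup>2) ^ k)
      sums (x ^ d * y ^ e / y\<^sup>2 * (1 / (1 - x\<^sup>2 / y\<^sup>2)))"
    by (intro sums_mult geometric_sums ratio)
  have term_eq: "x ^ d * y ^ e / y\<^sup>2 * (x\<^sup>2 / y\<^sup>2) ^ k = x ^ (2 * k + d) * (y ^ e / y ^ (2 * k + 2))" for k
  proof -
    have "x ^ (2 * k + d) = (x\<^sup>2) ^ k * x ^ d" and "y ^ (2 * k + 2) = (y\<^sup>2) ^ k * y\<^sup>2"
      by (simp_all add: power_add power_mult power2_eq_square)
    then show ?thesis
      by (simp add: power_divide mult_ac)
  qed
  have limit_eq: "x ^ d * y ^ e / y\<^sup>2 * (1 / (1 - x\<^sup>2 / y\<^sup>2)) = x ^ d * y ^ e / (y\<^sup>2 - x\<^sup>2)"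
    using y \<open>x\<^sup>2 < y\<^sup>2\<close> by (simp add: field_simps)
  show ?thesis
    using geometric unfolding term_eq limit_eq .
qed

lemma power_divide_power_antimono:
  fixes y \<beta> :: real
  assumes "0 < \<beta>" and "\<beta> \<le> y" and "e \<le> n"
  shows "y ^ e / y ^ n \<le> \<beta> ^ e / \<beta> ^ n"
proof -
  have "z ^ e / z ^ n = 1 / z ^ (n - e)" if "0 < z" for z :: real
    using that assms(3) by (simp add: power_diff)
  moreover have "1 / y ^ (n - e) \<le> 1 / \<beta> ^ (n - e)"
    using assms by (intro divide_left_mono power_mono mult_pos_pos zero_less_power) auto
  ultimately show ?thesis
    using assms by simp
qed

lemma cauchy_multiplier_norms_le_small_rows:
  fixes K M :: "real mat" and x y :: "nat \<Rightarrow> real"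
  assumes K: "K \<in> carrier_mat a b" and M: "M \<in> carrier_mat a b" and "0 < b"
    and x: "\<And>i. i < a \<Longrightarrow> 0 \<le> x i \<and> x i \<le> \<alpha>" and y: "\<And>j. j < b \<Longrightarrow> \<beta> \<le> y j"
    and \<alpha>: "0 \<le> \<alpha>" and gap: "\<alpha> < \<beta>" and "e \<le> 2"
    and c: "\<alpha> ^ d * \<beta> ^ e / (\<beta>\<^sup>2 - \<alpha>\<^sup>2) \<le> c"
    and entries: "\<And>i j. i < a \<Longrightarrow> j < b \<Longrightarrow>
      M $$ (i, j) = x i ^ d * y j ^ e / ((y j)\<^sup>2 - (x i)\<^sup>2) * K $$ (i, j)"
  shows "frob_norm M \<le> c * frob_norm K \<and> spec_norm M \<le> c * spec_norm K"
proof -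
  interpret diagonal_scaling_series K M a b
    "\<lambda>k i. x i ^ (2 * k + d)" "\<lambda>k j. y j ^ e / y j ^ (2 * k + 2)"
    "\<lambda>k. \<alpha> ^ (2 * k + d)" "\<lambda>k. \<beta> ^ e / \<beta> ^ (2 * k + 2)" "\<alpha> ^ d * \<beta> ^ e / (\<beta>\<^sup>2 - \<alpha>\<^sup>2)"
  proof
    fix i j assume ij: "i < a" "j < b"
    have "x i < y j"
      using x[OF ij(1)] y[OF ij(2)] gap by linarith
    then show "(\<lambda>k. x i ^ (2 * k + d) * K $$ (i, j) * (y j ^ e / y j ^ (2 * k + 2))) sums M $$ (i, j)"
      using sums_mult2[OF gap_geometric_sums[of "x i" "y j" d e], of "K $$ (i, j)"] x[OF ij(1)] entries[OF ij]
      by (simp add: mult_ac)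
  next
    show "\<bar>x i ^ (2 * k + d)\<bar> \<le> \<alpha> ^ (2 * k + d)" if "i < a" for k i
      using x[OF that] by (simp add: power_mono)
    show "\<bar>y j ^ e / y j ^ (2 * k + 2)\<bar> \<le> \<beta> ^ e / \<beta> ^ (2 * k + 2)" if "j < b" for k j
      using power_divide_power_antimono[of \<beta> "y j" e "2 * k + 2"] y[OF that] \<alpha> gap \<open>e \<le> 2\<close> by simp
    show "(\<lambda>k. \<alpha> ^ (2 * k + d) * (\<beta> ^ e / \<beta> ^ (2 * k + 2))) sums (\<alpha> ^ d * \<beta> ^ e / (\<beta>\<^sup>2 - \<alpha>\<^sup>2))"
      using \<alpha> gap by (rule gap_geometric_sums)
  qed (use K M \<alpha> gap in auto)
  have "0 \<le> spec_norm K"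
    using spec_norm_nonneg[of K] K \<open>0 < b\<close> by simp
  then show ?thesis
    using frob_norm_le spec_norm_le[OF \<open>0 < b\<close>] frob_norm_nonneg[of K] c
    by (meson mult_right_mono order_trans)
qed

lemma cauchy_multiplier_norms_le_small_cols:
  fixes K M :: "real mat" and x y :: "nat \<Rightarrow> real"
  assumes K: "K \<in> carrier_mat a b" and M: "M \<in> carrier_mat a b" and "0 < b"
    and x: "\<And>j. j < b \<Longrightarrow> 0 \<le> x j \<and> x j \<le> \<alpha>" and y: "\<And>i. i < a \<Longrightarrow> \<beta> \<le> y i"
    and \<alpha>: "0 \<le> \<alpha>" and gap: "\<alpha> < \<beta>" and "e \<le> 2"
    and c: "\<alpha> ^ d * \<beta> ^ e / (\<beta>\<^sup>2 - \<alpha>\<^sup>2) \<le> c"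
    and entries: "\<And>i j. i < a \<Longrightarrow> j < b \<Longrightarrow>
      M $$ (i, j) = x j ^ d * y i ^ e / ((x j)\<^sup>2 - (y i)\<^sup>2) * K $$ (i, j)"
  shows "frob_norm M \<le> c * frob_norm K \<and> spec_norm M \<le> c * spec_norm K"
proof -
  \<comment> \<open>The denominator \<open>(x j)\<^sup>2 - (y i)\<^sup>2\<close> is negative, hence the sign in the row factor.\<close>
  interpret diagonal_scaling_series K M a b
    "\<lambda>k i. - (y i ^ e / y i ^ (2 * k + 2))" "\<lambda>k j. x j ^ (2 * k + d)"
    "\<lambda>k. \<beta> ^ e / \<beta> ^ (2 * k + 2)" "\<lambda>k. \<alpha> ^ (2 * k + d)" "\<alpha> ^ d * \<beta> ^ e / (\<beta>\<^sup>2 - \<alpha>\<^sup>2)"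
  proof
    fix i j assume ij: "i < a" "j < b"
    have "x j < y i"
      using x[OF ij(2)] y[OF ij(1)] gap by linarith
    then have series: "(\<lambda>k. - (K $$ (i, j) * (x j ^ (2 * k + d) * (y i ^ e / y i ^ (2 * k + 2)))))
        sums - (K $$ (i, j) * (x j ^ d * y i ^ e / ((y i)\<^sup>2 - (x j)\<^sup>2)))"
      using x[OF ij(2)] by (intro sums_minus sums_mult gap_geometric_sums) auto
    have entry_eq: "M $$ (i, j) = - (K $$ (i, j) * (x j ^ d * y i ^ e / ((y i)\<^sup>2 - (x j)\<^sup>2)))"
    proof -
      have "(x j)\<^sup>2 - (y i)\<^sup>2 = - ((y i)\<^sup>2 - (x j)\<^sup>2)"
        by simp
      then show ?thesis
        using entries[OF ij] by (simp only: divide_minus_right mult.commute)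
    qed
    have term_eq: "- (y i ^ e / y i ^ (2 * k + 2)) * K $$ (i, j) * x j ^ (2 * k + d)
        = - (K $$ (i, j) * (x j ^ (2 * k + d) * (y i ^ e / y i ^ (2 * k + 2))))" for k
      by (simp only: mult_ac mult_minus_left)
    show "(\<lambda>k. - (y i ^ e / y i ^ (2 * k + 2)) * K $$ (i, j) * x j ^ (2 * k + d)) sums M $$ (i, j)"
      unfolding term_eq entry_eq by (rule series)
  next
    show "\<bar>- (y i ^ e / y i ^ (2 * k + 2))\<bar> \<le> \<beta> ^ e / \<beta> ^ (2 * k + 2)" if "i < a" for k i
      using power_divide_power_antimono[of \<beta> "y i" e "2 * k + 2"] y[OF that] \<alpha> gap \<open>e \<le> 2\<close> by simp
    show "\<bar>x j ^ (2 * k + d)\<bar> \<le> \<alpha> ^ (2 * k + d)" if "j < b" for k j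
      using x[OF that] by (simp add: power_mono)
    show "(\<lambda>k. \<beta> ^ e / \<beta> ^ (2 * k + 2) * \<alpha> ^ (2 * k + d)) sums (\<alpha> ^ d * \<beta> ^ e / (\<beta>\<^sup>2 - \<alpha>\<^sup>2))"
      using gap_geometric_sums[OF \<alpha> gap, of d e] by (simp add: mult.commute)
  qed (use K M \<alpha> gap in auto)
  have "0 \<le> spec_norm K"
    using spec_norm_nonneg[of K] K \<open>0 < b\<close> by simp
  then show ?thesis
    using frob_norm_le spec_norm_le[OF \<open>0 < b\<close>] frob_norm_nonneg[of K] c
    by (meson mult_right_mono order_trans)
qed

lemma transpose_rect_diag: "transpose_mat (rect_diag a b d) = rect_diag b a d"
  by (auto simp: rect_diag_def)

lemma index_rect_diag_mult:
  assumes "H \<in> carrier_mat b c" and "i < a" and "j < c"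
  shows "(rect_diag a b d * H) $$ (i, j) = (if i < b then d i * H $$ (i, j) else 0)"
proof -
  have "(rect_diag a b d * H) $$ (i, j) = (\<Sum>k<b. (if i = k then d i else 0) * H $$ (k, j))"
    using assms by (simp add: rect_diag_def scalar_prod_def row_def col_def atLeast0LessThan)
  also have "\<dots> = (\<Sum>k<b. if k = i then d i * H $$ (k, j) else 0)"
    by (intro sum.cong) auto
  finally show ?thesis
    by simp
qed

lemma index_mult_rect_diag:
  assumes "H \<in> carrier_mat a b" and "i < a" and "j < c"
  shows "(H * rect_diag b c d) $$ (i, j) = (if j < b then H $$ (i, j) * d j else 0)"
proof -
  have "(H * rect_diag b c d) $$ (i, j) = (\<Sum>k<b. H $$ (i, k) * (if k = j then d k else 0))"
    using assms by (simp add: rect_diag_def scalar_prod_def row_def col_def atLeast0LessThan)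
  also have "\<dots> = (\<Sum>k<b. if k = j then H $$ (i, k) * d j else 0)"
    by (intro sum.cong) auto
  finally show ?thesis
    by simp
qed

lemma singular_values_of_antimono:
  assumes "singular_values_of A s" and "1 \<le> i" and "i \<le> j"
  shows "s j \<le> s i"
  using assms unfolding singular_values_of_def Let_def by blast

lemma singular_values_of_nonneg:
  assumes "singular_values_of A s" and "1 \<le> i"
  shows "0 \<le> s i"
  using assms unfolding singular_values_of_def Let_def by blast

lemma singular_values_of_tail:
  assumes "singular_values_of A s"
  shows "0 \<le> s (r + i + 1) \<and> s (r + i + 1) \<le> s (r + 1)"
  using singular_values_of_nonneg[OF assms] singular_values_of_antimono[OF assms] by simp

lemma singular_values_of_head:
  assumes "singular_values_of A s" and "i < r"
  shows "s r \<le> s (i + 1)"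
  using singular_values_of_antimono[OF assms(1)] assms(2) by simp

lemma norms_hadamard_FU21_mult_Sig1_le:
  assumes "singular_values_of A s" and "singular_values_of A' st" and "s (r + 1) < st r"
    and "H \<in> carrier_mat (n - r) r" and "0 < r"
  shows "frob_norm (hadamard (FU21 n r s st) (H * Sig1 r st))
      \<le> st r / ((st r)\<^sup>2 - (s (r + 1))\<^sup>2) * frob_norm H
    \<and> spec_norm (hadamard (FU21 n r s st) (H * Sig1 r st))
      \<le> st r / ((st r)\<^sup>2 - (s (r + 1))\<^sup>2) * spec_norm H"
  by (rule cauchy_multiplier_norms_le_small_rows[where x = "\<lambda>i. s (r + i + 1)" and y = "\<lambda>j. st (j + 1)"
        and \<alpha> = "s (r + 1)" and \<beta> = "st r" and d = 0 and e = 1])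
    (use assms singular_values_of_tail[OF assms(1), of r] singular_values_of_head[OF assms(2)]
      singular_values_of_nonneg[OF assms(1), of "r + 1"] in
      \<open>auto simp: hadamard_def FU21_def Sig1_def index_mult_rect_diag\<close>)

lemma norms_hadamard_FU21_Sig2_mult_le:
  assumes "singular_values_of A s" and "singular_values_of A' st" and "s (r + 1) < st r"
    and H: "H \<in> carrier_mat (m - r) r" and "0 < r"
  shows "frob_norm (hadamard (FU21 n r s st) (Sig2 n m r s * H))
      \<le> s (r + 1) / ((st r)\<^sup>2 - (s (r + 1))\<^sup>2) * frob_norm H
    \<and> spec_norm (hadamard (FU21 n r s st) (Sig2 n m r s * H))
      \<le> s (r + 1) / ((st r)\<^sup>2 - (s (r + 1))\<^sup>2) * spec_norm H"
proof -
  let ?c = "s (r + 1) / ((st r)\<^sup>2 - (s (r + 1))\<^sup>2)"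
  have "frob_norm (hadamard (FU21 n r s st) (Sig2 n m r s * H)) \<le> ?c * frob_norm (mat_resize (n - r) r H)
    \<and> spec_norm (hadamard (FU21 n r s st) (Sig2 n m r s * H)) \<le> ?c * spec_norm (mat_resize (n - r) r H)"
    by (rule cauchy_multiplier_norms_le_small_rows[where x = "\<lambda>i. s (r + i + 1)" and y = "\<lambda>j. st (j + 1)"
          and \<alpha> = "s (r + 1)" and \<beta> = "st r" and d = 1 and e = 0])
      (use assms singular_values_of_tail[OF assms(1), of r] singular_values_of_head[OF assms(2)]
        singular_values_of_nonneg[OF assms(1), of "r + 1"] in
        \<open>auto simp: hadamard_def FU21_def Sig2_def mat_resize_def index_rect_diag_mult\<close>)
  moreover have "0 \<le> ?c"
    using singular_values_of_nonneg[OF assms(1), of "r + 1"] assms(3)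
    by (intro divide_nonneg_pos) (auto intro: power_strict_mono)
  moreover have "spec_norm (mat_resize (n - r) r H) \<le> spec_norm H"
    using H \<open>0 < r\<close> by (intro spec_norm_mat_resize_le) auto
  ultimately show ?thesis
    using frob_norm_mat_resize_le[of "n - r" r H] by (meson mult_left_mono order_trans)
qed

lemma norms_hadamard_FU12_mult_Sig2T_le:
  assumes "singular_values_of A s" and "singular_values_of A' st" and "st (r + 1) < s r"
    and H: "H \<in> carrier_mat r (m - r)" and "r < n" and "r < m"
  shows "frob_norm (hadamard (FU12 n r s st) (H * transpose_mat (Sig2 n m r st)))
      \<le> st (r + 1) / ((s r)\<^sup>2 - (st (r + 1))\<^sup>2) * frob_norm H
    \<and> spec_norm (hadamard (FU12 n r s st) (H * transpose_mat (Sig2 n m r st)))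
      \<le> st (r + 1) / ((s r)\<^sup>2 - (st (r + 1))\<^sup>2) * spec_norm H"
proof -
  let ?c = "st (r + 1) / ((s r)\<^sup>2 - (st (r + 1))\<^sup>2)"
  have "frob_norm (hadamard (FU12 n r s st) (H * transpose_mat (Sig2 n m r st)))
      \<le> ?c * frob_norm (mat_resize r (n - r) H)
    \<and> spec_norm (hadamard (FU12 n r s st) (H * transpose_mat (Sig2 n m r st)))
      \<le> ?c * spec_norm (mat_resize r (n - r) H)"
    by (rule cauchy_multiplier_norms_le_small_cols[where x = "\<lambda>j. st (r + j + 1)" and y = "\<lambda>i. s (i + 1)"
          and \<alpha> = "st (r + 1)" and \<beta> = "s r" and d = 1 and e = 0])
      (use assms singular_values_of_tail[OF assms(2), of r] singular_values_of_head[OF assms(1)]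
        singular_values_of_nonneg[OF assms(2), of "r + 1"] in
        \<open>auto simp: hadamard_def FU12_def Sig2_def mat_resize_def transpose_rect_diag index_mult_rect_diag\<close>)
  moreover have "0 \<le> ?c"
    using singular_values_of_nonneg[OF assms(2), of "r + 1"] assms(3)
    by (intro divide_nonneg_pos) (auto intro: power_strict_mono)
  moreover have "spec_norm (mat_resize r (n - r) H) \<le> spec_norm H"
    using H assms(5,6) by (intro spec_norm_mat_resize_le) auto
  ultimately show ?thesis
    using frob_norm_mat_resize_le[of r "n - r" H] by (meson mult_left_mono order_trans)
qed

lemma norms_hadamard_FU12_Sig1_mult_le:
  assumes "singular_values_of A s" and "singular_values_of A' st" and "st (r + 1) < s r"
    and "H \<in> carrier_mat r (n - r)" and "r < n"
  shows "frob_norm (hadamard (FU12 n r s st) (Sig1 r s * H))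
      \<le> s r / ((s r)\<^sup>2 - (st (r + 1))\<^sup>2) * frob_norm H
    \<and> spec_norm (hadamard (FU12 n r s st) (Sig1 r s * H))
      \<le> s r / ((s r)\<^sup>2 - (st (r + 1))\<^sup>2) * spec_norm H"
  by (rule cauchy_multiplier_norms_le_small_cols[where x = "\<lambda>j. st (r + j + 1)" and y = "\<lambda>i. s (i + 1)"
        and \<alpha> = "st (r + 1)" and \<beta> = "s r" and d = 0 and e = 1])
    (use assms singular_values_of_tail[OF assms(2), of r] singular_values_of_head[OF assms(1)]
      singular_values_of_nonneg[OF assms(2), of "r + 1"] in
      \<open>auto simp: hadamard_def FU12_def Sig1_def index_rect_diag_mult\<close>)

theorem lemma2p5:
  fixes A dA H1 H2 H3 H4 :: "real mat" and n m r :: nat and s st :: "nat \<Rightarrow> real"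
  assumes "A \<in> carrier_mat n m" and "dA \<in> carrier_mat n m"
    and "1 \<le> r" and "r < min n m"
    and "singular_values_of A s" and "singular_values_of (A + dA) st"
    and "s r - st (r + 1) > 0" and "st r - s (r + 1) > 0"
    and "H1 \<in> carrier_mat (n - r) r" and "H2 \<in> carrier_mat (m - r) r"
    and "H3 \<in> carrier_mat r (m - r)" and "H4 \<in> carrier_mat r (n - r)"
  shows
    "let B1 = hadamard (FU21 n r s st) (H1 * Sig1 r st);
         B2 = hadamard (FU21 n r s st) (Sig2 n m r s * H2);
         B3 = hadamard (FU12 n r s st) (H3 * transpose_mat (Sig2 n m r st));
         B4 = hadamard (FU12 n r s st) (Sig1 r s * H4);
         c1 = st r / ((st r)\<^sup>2 - (s (r+1))\<^sup>2);
         c2 = s (r+1) / ((st r)\<^sup>2 - (s (r+1))\<^sup>2);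
         c3 = st (r+1) / ((s r)\<^sup>2 - (st (r+1))\<^sup>2);
         c4 = s r / ((s r)\<^sup>2 - (st (r+1))\<^sup>2)
     in frob_norm B1 \<le> c1 * frob_norm H1 \<and> spec_norm B1 \<le> c1 * spec_norm H1 \<and>
        frob_norm B2 \<le> c2 * frob_norm H2 \<and> spec_norm B2 \<le> c2 * spec_norm H2 \<and>
        frob_norm B3 \<le> c3 * frob_norm H3 \<and> spec_norm B3 \<le> c3 * spec_norm H3 \<and>
        frob_norm B4 \<le> c4 * frob_norm H4 \<and> spec_norm B4 \<le> c4 * spec_norm H4"
proof -
  have r: "0 < r" "r < n" "r < m"
    using assms(3,4) by auto
  have gaps: "s (r + 1) < st r" "st (r + 1) < s r"
    using assms(7,8) by simp_all
  show ?thesis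
    unfolding Let_def
    using norms_hadamard_FU21_mult_Sig1_le[OF assms(5,6) gaps(1) assms(9) r(1)]
      norms_hadamard_FU21_Sig2_mult_le[OF assms(5,6) gaps(1) assms(10) r(1)]
      norms_hadamard_FU12_mult_Sig2T_le[OF assms(5,6) gaps(2) assms(11) r(2,3)]
      norms_hadamard_FU12_Sig1_mult_le[OF assms(5,6) gaps(2) assms(12) r(2)]
    by blast
qed

end
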